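(* If $(C_1,F_1)$ and $(C_2,F_2)$ are antlers in an undirected multigraph $G$, then $(C_1\setminus(C_2\cup F_2),\,F_1\setminus(C_2\cup F_2))$ is an antler in $G-(C_2\cup F_2)$.
   Context: A feedback vertex set (FVS) of $G$ is a set $X\subseteq V(G)$ with $G-X$ acyclic (self-loops and pairs of parallel edges count as cycles); $\mathrm{fvs}(G)$ is the minimum size of a FVS. For disjoint $X,Y$, $e(X,Y)$ is the number of edges between $X$ and $Y$. A feedback vertex cut (FVC) in $G$ is a pair of disjoint sets $C,F\subseteq V(G)$ such that $G[F]$ is a forest and every tree $T$ of $G[F]$ satisfies $e(V(T),V(G)\setminus(C\cup F))\le1$. An antler in $G$ is a FVC $(C,F)$ with $|C|\le\mathrm{fvs}(G[C\cup F])$. *)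

theory Defs
  imports "HOL-Library.Multiset" "HOL-Library.Uprod"
begin

text \<open>A finite undirected multigraph: a vertex set and a multiset of unordered
  pairs of vertices (edges); an edge Upair v v is a self-loop, and the multiplicity
  of Upair u v is the number of parallel edges between u and v.\<close>

record 'a mgraph =
  verts :: "'a set"
  edges :: "'a uprod multiset"

definition wf_mgraph :: "'a mgraph \<Rightarrow> bool" where
  "wf_mgraph G \<longleftrightarrow> finite (verts G) \<and> (\<forall>e\<in>#edges G. set_uprod e \<subseteq> verts G)"

definition induced :: "'a mgraph \<Rightarrow> 'a set \<Rightarrow> 'a mgraph" where
  "induced G S = \<lparr>verts = verts G \<inter> S,
                  edges = filter_mset (\<lambda>e. set_uprod e \<subseteq> verts G \<inter> S) (edges G)\<rparr>"

definition delete :: "'a mgraph \<Rightarrow> 'a set \<Rightarrow> 'a mgraph" where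
  "delete G X = induced G (verts G - X)"

text \<open>A cycle: k \<ge> 1 distinct vertices v_0..v_(k-1) together with k distinct edge
  occurrences joining v_i and v_(i+1 mod k).  k = 1 is a self-loop, k = 2 a pair of
  parallel edges.\<close>
definition has_cycle :: "'a mgraph \<Rightarrow> bool" where
  "has_cycle G \<longleftrightarrow> (\<exists>vs. vs \<noteq> [] \<and> distinct vs \<and> set vs \<subseteq> verts G \<and>
     mset (map (\<lambda>i. Upair (vs ! i) (vs ! ((i + 1) mod length vs))) [0..<length vs])
       \<subseteq># edges G)"

definition forest :: "'a mgraph \<Rightarrow> bool" where
  "forest G \<longleftrightarrow> \<not> has_cycle G"

definition is_fvs :: "'a mgraph \<Rightarrow> 'a set \<Rightarrow> bool" where
  "is_fvs G X \<longleftrightarrow> X \<subseteq> verts G \<and> forest (delete G X)"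

definition fvs :: "'a mgraph \<Rightarrow> nat" where
  "fvs G = (LEAST k. \<exists>X. is_fvs G X \<and> card X = k)"

definition e_between :: "'a mgraph \<Rightarrow> 'a set \<Rightarrow> 'a set \<Rightarrow> nat" where
  "e_between G X Y = size (filter_mset (\<lambda>e. \<exists>x\<in>X. \<exists>y\<in>Y. e = Upair x y) (edges G))"

definition adj_rel :: "'a mgraph \<Rightarrow> ('a \<times> 'a) set" where
  "adj_rel G = {(x, y). x \<in> verts G \<and> y \<in> verts G \<and> Upair x y \<in># edges G}"

definition component :: "'a mgraph \<Rightarrow> 'a \<Rightarrow> 'a set" where
  "component G v = {w. (v, w) \<in> (adj_rel G)\<^sup>*}"

definition components :: "'a mgraph \<Rightarrow> 'a set set" where
  "components G = component G ` verts G"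

definition fvc :: "'a mgraph \<Rightarrow> 'a set \<Rightarrow> 'a set \<Rightarrow> bool" where
  "fvc G C F \<longleftrightarrow> C \<subseteq> verts G \<and> F \<subseteq> verts G \<and> C \<inter> F = {} \<and>
     forest (induced G F) \<and>
     (\<forall>T \<in> components (induced G F). e_between G T (verts G - (C \<union> F)) \<le> 1)"

definition antler :: "'a mgraph \<Rightarrow> 'a set \<Rightarrow> 'a set \<Rightarrow> bool" where
  "antler G C F \<longleftrightarrow> fvc G C F \<and> card C \<le> fvs (induced G (C \<union> F))"

end

theory Submission
  imports Defs
begin

text \<open>Let A = C1 \<union> F1 and S = C2 \<union> F2. The cut condition for (C1 - S, F1 - S) in G - S is
  inherited from (C1, F1): passing to an induced subgraph only shrinks the trees of the
  forest and the sets they attach to. For the size condition, the key fact is that for a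
  feedback vertex cut (C, F) and R disjoint from C \<union> F, a FVS of G[R] together with C is a
  FVS of G[R \<union> C \<union> F], since every tree of G[F] is attached to G[R] by at most one edge.
  Applied to (C2, F2) in G and to (C1 \<inter> S, F1 \<inter> S) in G[S], this gives
  fvs G[A \<union> S] \<le> fvs G[A - S] + |C2| and fvs G[S] \<le> fvs G[S - A] + |C1 \<inter> S|.
  Chaining with |C1| \<le> fvs G[A], |C2| \<le> fvs G[S] and the superadditivity
  fvs G[A] + fvs G[S - A] \<le> fvs G[A \<union> S] yields |C1 - S| \<le> fvs G[A - S].\<close>

definition cycle_edges :: "'a list \<Rightarrow> 'a uprod list" where
  "cycle_edges vs = map (\<lambda>i. Upair (vs ! i) (vs ! ((i + 1) mod length vs))) [0..<length vs]"

lemma cyclic_exit: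
  fixes p q n :: nat
  assumes "p < n" "q < n" "P p" "\<not> P q"
  shows "\<exists>i<n. P i \<and> \<not> P ((i + 1) mod n)"
proof (rule ccontr)
  assume "\<not> ?thesis"
  then have step: "\<And>i. i < n \<Longrightarrow> P i \<Longrightarrow> P ((i + 1) mod n)" by blast
  have "P ((p + k) mod n)" for k
  proof (induction k)
    case 0
    then show ?case using assms by simp
  next
    case (Suc k)
    have "(p + k) mod n < n" using assms(1) by simp
    from step[OF this Suc] show ?case by (simp add: mod_Suc_eq)
  qed
  from this[of "q + n - p"] have "P ((q + n) mod n)" using assms(1) by simp
  then show False using assms by simp
qed

lemma two_le_crossing_cycle_edges:
  assumes "p < length vs" "q < length vs" "vs ! p \<in> T" "vs ! q \<notin> T"
  shows "2 \<le> size (filter_mset (\<lambda>e. \<exists>x\<in>T. \<exists>y\<in>set vs - T. e = Upair x y) (mset (cycle_edges vs)))"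
    (is "_ \<le> size (filter_mset ?crossing _)")
proof -
  define n where "n = length vs"
  define f where "f = (\<lambda>i. Upair (vs ! i) (vs ! ((i + 1) mod n)))"
  have "0 < n" using assms(1) unfolding n_def by linarith
  then have succ: "(i + 1) mod n < n" for i by simp
  obtain i where i: "i < n" "vs ! i \<in> T" "vs ! ((i + 1) mod n) \<notin> T"
    using cyclic_exit[of p n q "\<lambda>i. vs ! i \<in> T"] assms by (auto simp: n_def)
  obtain j where j: "j < n" "vs ! j \<notin> T" "vs ! ((j + 1) mod n) \<in> T"
    using cyclic_exit[of q n p "\<lambda>i. vs ! i \<notin> T"] assms by (auto simp: n_def)
  have crossing_i: "?crossing (f i)"
    using i nth_mem[OF succ[of i, unfolded n_def]] by (auto simp: f_def n_def)
  have crossing_j: "?crossing (f j)"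
    using j nth_mem[OF j(1)[unfolded n_def]] unfolding f_def n_def by (metis DiffI Upair_inject)
  have "i \<noteq> j" using i j by blast
  then have "{#i, j#} \<subseteq># mset [0..<n]"
    using subset_imp_msubset_mset_set[of "{i, j}" "{0..<n}"] i(1) j(1) by simp
  then have "image_mset f {#i, j#} \<subseteq># image_mset f (mset [0..<n])"
    by (rule image_mset_subseteq_mono)
  moreover have "image_mset f (mset [0..<n]) = mset (cycle_edges vs)"
    by (simp add: cycle_edges_def f_def n_def)
  ultimately have "{#f i, f j#} \<subseteq># mset (cycle_edges vs)" by simp
  then have "{#f i, f j#} \<subseteq># filter_mset ?crossing (mset (cycle_edges vs))"
    using multiset_filter_mono[of "{#f i, f j#}" _ ?crossing] crossing_i crossing_j by simp
  from size_mset_mono[OF this] show ?thesis by simp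
qed

lemma set_uprod_cycle_edges: "e \<in> set (cycle_edges vs) \<Longrightarrow> set_uprod e \<subseteq> set vs"
proof -
  assume "e \<in> set (cycle_edges vs)"
  then obtain i where "i < length vs" "e = Upair (vs ! i) (vs ! ((i + 1) mod length vs))"
    by (auto simp: cycle_edges_def)
  moreover from \<open>i < length vs\<close> have "(i + 1) mod length vs < length vs"
    by (intro mod_less_divisor) linarith
  ultimately show ?thesis by auto
qed

lemma verts_induced [simp]: "verts (induced G P) = verts G \<inter> P"
  by (simp add: induced_def)

lemma edges_induced_subset: "edges (induced G P) \<subseteq># edges G"
  by (simp add: induced_def)

lemma induced_cong: "verts G \<inter> P = verts G \<inter> Q \<Longrightarrow> induced G P = induced G Q"
  by (simp add: induced_def)

lemma induced_induced: "induced (induced G P) Q = induced G (P \<inter> Q)"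
  by (simp add: induced_def filter_filter_mset Int_assoc) (rule filter_mset_cong0, blast)

lemma has_cycle_induced:
  "has_cycle (induced G P) \<longleftrightarrow>
    (\<exists>vs. vs \<noteq> [] \<and> distinct vs \<and> set vs \<subseteq> verts G \<inter> P \<and> mset (cycle_edges vs) \<subseteq># edges G)"
proof -
  have "mset (cycle_edges vs) \<subseteq># edges (induced G P) \<longleftrightarrow> mset (cycle_edges vs) \<subseteq># edges G"
    if "set vs \<subseteq> verts G \<inter> P" for vs :: "'a list"
  proof
    show "mset (cycle_edges vs) \<subseteq># edges G" if "mset (cycle_edges vs) \<subseteq># edges (induced G P)"
      using that edges_induced_subset subset_mset.order_trans by blast
    show "mset (cycle_edges vs) \<subseteq># edges (induced G P)" if "mset (cycle_edges vs) \<subseteq># edges G"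
      using filter_mset_mono_strong[OF that, of "\<lambda>_. True" "\<lambda>e. set_uprod e \<subseteq> verts G \<inter> P"]
        set_uprod_cycle_edges \<open>set vs \<subseteq> verts G \<inter> P\<close>
      by (fastforce simp: induced_def)
  qed
  then show ?thesis
    unfolding has_cycle_def cycle_edges_def[symmetric] verts_induced by blast
qed

lemma forest_induced_subset:
  "forest (induced G P) \<Longrightarrow> Q \<subseteq> P \<Longrightarrow> forest (induced G Q)"
  unfolding forest_def has_cycle_induced by blast

lemma component_induced_subset:
  assumes "u \<in> verts G \<inter> F"
  shows "component (induced G F) u \<subseteq> verts G \<inter> F"
proof
  fix w assume "w \<in> component (induced G F) u"
  then have "(u, w) \<in> (adj_rel (induced G F))\<^sup>*" by (simp add: component_def)
  then show "w \<in> verts G \<inter> F"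
    by (induction rule: rtrancl_induct) (use assms in \<open>auto simp: adj_rel_def\<close>)
qed

lemma component_induced_edge_closed:
  assumes "w \<in> component (induced G F) u" "w \<in> verts G \<inter> F" "x \<in> verts G \<inter> F"
    "Upair w x \<in># edges G"
  shows "x \<in> component (induced G F) u"
proof -
  have "(w, x) \<in> adj_rel (induced G F)"
    using assms by (auto simp: adj_rel_def induced_def)
  with assms(1) show ?thesis
    unfolding component_def by (auto intro: rtrancl_into_rtrancl)
qed

lemma components_induced_mono:
  assumes "F' \<subseteq> F" "T \<in> components (induced G F')"
  shows "\<exists>T' \<in> components (induced G F). T \<subseteq> T'"
proof -
  obtain u where u: "u \<in> verts G \<inter> F'" "T = component (induced G F') u"
    using assms(2) by (auto simp: components_def)
  have "adj_rel (induced G F') \<subseteq> adj_rel (induced G F)"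
    using assms(1) by (auto simp: adj_rel_def induced_def)
  then have "T \<subseteq> component (induced G F) u"
    unfolding u(2) component_def using rtrancl_mono by blast
  moreover have "component (induced G F) u \<in> components (induced G F)"
    using u assms(1) by (auto simp: components_def)
  ultimately show ?thesis by blast
qed

lemma e_between_mono:
  assumes "edges H \<subseteq># edges G" "T \<subseteq> T'" "X \<subseteq> X'"
  shows "e_between H T X \<le> e_between G T' X'"
  unfolding e_between_def
  by (rule size_mset_mono, rule filter_mset_mono_strong[OF assms(1)]) (use assms in blast)

text \<open>A cycle inside F \<union> R that is not inside R meets some tree T of G[F]; it cannot
  stay inside T, so it leaves and re-enters T, and every edge by which it leaves T
  goes to R. This gives two edges between T and R.\<close>

lemma forest_induced_Un:
  assumes "F \<inter> R = {}" "forest (induced G F)" "forest (induced G R)"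
    and trees: "\<forall>T \<in> components (induced G F). e_between G T R \<le> 1"
  shows "forest (induced G (F \<union> R))"
proof (rule ccontr)
  assume "\<not> forest (induced G (F \<union> R))"
  then obtain vs where vs: "vs \<noteq> []" "distinct vs" "set vs \<subseteq> verts G \<inter> (F \<union> R)"
    "mset (cycle_edges vs) \<subseteq># edges G"
    unfolding forest_def has_cycle_induced by blast
  have "\<not> set vs \<subseteq> verts G \<inter> R"
    using assms(3) vs unfolding forest_def has_cycle_induced by blast
  then obtain p where "p < length vs" "vs ! p \<notin> R"
    using vs(3) by (metis Int_iff in_set_conv_nth subsetD subsetI)
  with vs(3) have p: "p < length vs" "vs ! p \<in> verts G \<inter> F"
    using nth_mem by blast+
  define T where "T = component (induced G F) (vs ! p)"
  have TF: "T \<subseteq> verts G \<inter> F"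
    unfolding T_def by (rule component_induced_subset[OF p(2)])
  have "T \<in> components (induced G F)"
    using p(2) by (auto simp: T_def components_def)
  with trees have le1: "e_between G T R \<le> 1" by blast
  have "vs ! p \<in> T" by (simp add: T_def component_def)
  have "\<not> set vs \<subseteq> T"
    using assms(2) vs TF unfolding forest_def has_cycle_induced by blast
  then obtain q where q: "q < length vs" "vs ! q \<notin> T"
    by (metis in_set_conv_nth subsetI)
  let ?crossing = "\<lambda>e. \<exists>x\<in>T. \<exists>y\<in>set vs - T. e = Upair x y"
  have "2 \<le> size (filter_mset ?crossing (mset (cycle_edges vs)))"
    using two_le_crossing_cycle_edges[OF p(1) q(1) \<open>vs ! p \<in> T\<close> q(2)] .
  also have "\<dots> \<le> e_between G T R"
    unfolding e_between_def
  proof (rule size_mset_mono, rule filter_mset_mono_strong[OF vs(4)])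
    fix e assume "e \<in># mset (cycle_edges vs)" "?crossing e"
    then obtain x y where xy: "x \<in> T" "y \<in> set vs - T" "e = Upair x y" "Upair x y \<in># edges G"
      using vs(4) by (metis mset_subset_eqD)
    have "y \<in> R"
    proof (rule ccontr)
      assume "y \<notin> R"
      then have "y \<in> verts G \<inter> F" using xy(2) vs(3) by blast
      then have "y \<in> T"
        using component_induced_edge_closed[of x G F "vs ! p" y] xy TF by (auto simp: T_def)
      with xy(2) show False by blast
    qed
    with xy show "\<exists>x\<in>T. \<exists>y\<in>R. e = Upair x y" by blast
  qed
  finally show False using le1 by simp
qed

lemma is_fvs_induced:
  "is_fvs (induced G P) X \<longleftrightarrow> X \<subseteq> verts G \<inter> P \<and> forest (induced G (verts G \<inter> P - X))"
proof -
  have "delete (induced G P) X = induced G (verts G \<inter> P - X)"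
    unfolding delete_def induced_induced by (rule induced_cong) auto
  then show ?thesis by (simp add: is_fvs_def)
qed

lemma fvs_le_card: "is_fvs H X \<Longrightarrow> fvs H \<le> card X"
  unfolding fvs_def by (rule Least_le) blast

lemma fvs_attained: "\<exists>X. is_fvs H X \<and> card X = fvs H"
proof -
  have "is_fvs H (verts H)"
    unfolding is_fvs_def forest_def delete_def has_cycle_induced by auto
  then have "\<exists>k X. is_fvs H X \<and> card X = k" by blast
  then show ?thesis unfolding fvs_def by (rule LeastI_ex)
qed

lemma fvs_induced_Un_ge:
  assumes "finite (verts G)" "P \<inter> Q = {}"
  shows "fvs (induced G P) + fvs (induced G Q) \<le> fvs (induced G (P \<union> Q))"
proof -
  obtain X where X: "is_fvs (induced G (P \<union> Q)) X" "card X = fvs (induced G (P \<union> Q))"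
    using fvs_attained by blast
  then have "X \<subseteq> verts G \<inter> (P \<union> Q)" and forest: "forest (induced G (verts G \<inter> (P \<union> Q) - X))"
    unfolding is_fvs_induced by auto
  with assms(1) have "finite X" by (blast intro: finite_subset)
  have "is_fvs (induced G P) (X \<inter> P)" "is_fvs (induced G Q) (X \<inter> Q)"
    unfolding is_fvs_induced using \<open>X \<subseteq> _\<close>
      forest_induced_subset[OF forest, of "verts G \<inter> P - X \<inter> P"]
      forest_induced_subset[OF forest, of "verts G \<inter> Q - X \<inter> Q"] by auto
  then have "fvs (induced G P) + fvs (induced G Q) \<le> card (X \<inter> P) + card (X \<inter> Q)"
    by (intro add_mono fvs_le_card)
  also have "\<dots> = card ((X \<inter> P) \<union> (X \<inter> Q))"
    using \<open>finite X\<close> assms(2) by (intro card_Un_disjoint[symmetric]) auto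
  also have "(X \<inter> P) \<union> (X \<inter> Q) = X"
    using \<open>X \<subseteq> _\<close> by blast
  finally show ?thesis using X(2) by simp
qed

lemma fvs_induced_Un_fvc_le:
  assumes "fvc G C F" "R \<inter> (C \<union> F) = {}"
  shows "fvs (induced G (R \<union> C \<union> F)) \<le> fvs (induced G R) + card C"
proof -
  obtain Y where Y: "is_fvs (induced G R) Y" "card Y = fvs (induced G R)"
    using fvs_attained by blast
  then have "Y \<subseteq> verts G \<inter> R" and forest_R: "forest (induced G (verts G \<inter> R - Y))"
    unfolding is_fvs_induced by auto
  have C: "C \<subseteq> verts G" "C \<inter> F = {}" and forest_F: "forest (induced G F)"
    and trees: "\<forall>T \<in> components (induced G F). e_between G T (verts G - (C \<union> F)) \<le> 1"
    using assms(1) by (auto simp: fvc_def)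
  have "forest (induced G (F \<union> (verts G \<inter> R - Y)))"
  proof (rule forest_induced_Un[OF _ forest_F forest_R])
    show "F \<inter> (verts G \<inter> R - Y) = {}" using assms(2) by blast
    show "\<forall>T \<in> components (induced G F). e_between G T (verts G \<inter> R - Y) \<le> 1"
    proof
      fix T assume "T \<in> components (induced G F)"
      have "e_between G T (verts G \<inter> R - Y) \<le> e_between G T (verts G - (C \<union> F))"
        by (rule e_between_mono) (use assms(2) in auto)
      also have "\<dots> \<le> 1" using trees \<open>T \<in> _\<close> by blast
      finally show "e_between G T (verts G \<inter> R - Y) \<le> 1" .
    qed
  qed
  moreover have "verts G \<inter> (R \<union> C \<union> F) - (Y \<union> C) \<subseteq> F \<union> (verts G \<inter> R - Y)"
    by blast
  ultimately have "is_fvs (induced G (R \<union> C \<union> F)) (Y \<union> C)"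
    unfolding is_fvs_induced using \<open>Y \<subseteq> _\<close> C(1) by (blast intro: forest_induced_subset)
  then have "fvs (induced G (R \<union> C \<union> F)) \<le> card (Y \<union> C)" by (rule fvs_le_card)
  also have "\<dots> \<le> card Y + card C" by (rule card_Un_le)
  finally show ?thesis using Y(2) by simp
qed

lemma fvc_induced:
  assumes "fvc G C F"
  shows "fvc (induced G S) (C \<inter> S) (F \<inter> S)"
  unfolding fvc_def
proof (intro conjI ballI)
  have CF: "C \<subseteq> verts G" "F \<subseteq> verts G" "C \<inter> F = {}" and forest: "forest (induced G F)"
    and trees: "\<forall>T \<in> components (induced G F). e_between G T (verts G - (C \<union> F)) \<le> 1"
    using assms by (auto simp: fvc_def)
  show "C \<inter> S \<subseteq> verts (induced G S)" "F \<inter> S \<subseteq> verts (induced G S)" "C \<inter> S \<inter> (F \<inter> S) = {}"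
    using CF by auto
  show "forest (induced (induced G S) (F \<inter> S))"
    unfolding induced_induced by (rule forest_induced_subset[OF forest]) blast
  fix T assume "T \<in> components (induced (induced G S) (F \<inter> S))"
  then obtain T' where T': "T' \<in> components (induced G F)" "T \<subseteq> T'"
    using components_induced_mono[of "S \<inter> (F \<inter> S)" F] unfolding induced_induced by blast
  have "e_between (induced G S) T (verts (induced G S) - (C \<inter> S \<union> F \<inter> S))
      \<le> e_between G T' (verts G - (C \<union> F))"
    by (rule e_between_mono[OF edges_induced_subset T'(2)]) auto
  also have "\<dots> \<le> 1" using trees T'(1) by blast
  finally show "e_between (induced G S) T (verts (induced G S) - (C \<inter> S \<union> F \<inter> S)) \<le> 1" .
qed

lemma card_Diff_le_fvs_antler:
  assumes "finite (verts G)" "antler G C1 F1" "antler G C2 F2"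
  shows "card (C1 - (C2 \<union> F2)) \<le> fvs (induced G (C1 \<union> F1 - (C2 \<union> F2)))"
proof -
  define A where "A = C1 \<union> F1"
  define S where "S = C2 \<union> F2"
  have fvc1: "fvc G C1 F1" and antler1: "card C1 \<le> fvs (induced G A)"
    using assms(2) by (simp_all add: antler_def A_def)
  have fvc2: "fvc G C2 F2" and antler2: "card C2 \<le> fvs (induced G S)"
    using assms(3) by (simp_all add: antler_def S_def)
  have "fvs (induced G A) + fvs (induced G (S - A)) \<le> fvs (induced G (A \<union> (S - A)))"
    by (rule fvs_induced_Un_ge[OF assms(1)]) blast
  also have "A \<union> (S - A) = (A - S) \<union> C2 \<union> F2"
    by (auto simp: S_def)
  also have "fvs (induced G \<dots>) \<le> fvs (induced G (A - S)) + card C2"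
    by (rule fvs_induced_Un_fvc_le[OF fvc2]) (auto simp: S_def)
  finally have outer: "fvs (induced G A) + fvs (induced G (S - A)) \<le> fvs (induced G (A - S)) + card C2" .
  have "fvs (induced (induced G S) ((S - A) \<union> (C1 \<inter> S) \<union> (F1 \<inter> S)))
      \<le> fvs (induced (induced G S) (S - A)) + card (C1 \<inter> S)"
    by (rule fvs_induced_Un_fvc_le[OF fvc_induced[OF fvc1]]) (auto simp: A_def)
  moreover have "induced (induced G S) ((S - A) \<union> (C1 \<inter> S) \<union> (F1 \<inter> S)) = induced G S"
    unfolding induced_induced by (rule induced_cong) (auto simp: A_def)
  moreover have "induced (induced G S) (S - A) = induced G (S - A)"
    unfolding induced_induced by (rule induced_cong) auto
  ultimately have inner: "fvs (induced G S) \<le> fvs (induced G (S - A)) + card (C1 \<inter> S)"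
    by simp
  have "finite C1"
    using fvc1 assms(1) by (auto simp: fvc_def intro: finite_subset)
  then have "card C1 = card (C1 \<inter> S) + card (C1 - S)" by (rule card_Int_Diff)
  with antler1 antler2 outer inner have "card (C1 - S) \<le> fvs (induced G (A - S))"
    by linarith
  then show ?thesis by (simp add: A_def S_def)
qed

theorem proposition11:
  fixes G :: "'a mgraph"
  assumes "wf_mgraph G"
    and "antler G C1 F1"
    and "antler G C2 F2"
  shows "antler (delete G (C2 \<union> F2)) (C1 - (C2 \<union> F2)) (F1 - (C2 \<union> F2))"
proof -
  let ?S = "C2 \<union> F2"
  have fvc1: "fvc G C1 F1" using assms(2) by (simp add: antler_def)
  then have "C1 - ?S = C1 \<inter> (verts G - ?S)" "F1 - ?S = F1 \<inter> (verts G - ?S)"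
    by (auto simp: fvc_def)
  then have "fvc (delete G ?S) (C1 - ?S) (F1 - ?S)"
    unfolding delete_def by (simp add: fvc_induced[OF fvc1])
  moreover have "induced (delete G ?S) (C1 - ?S \<union> (F1 - ?S)) = induced G (C1 \<union> F1 - ?S)"
    unfolding delete_def induced_induced by (rule induced_cong) auto
  moreover have "finite (verts G)" using assms(1) by (simp add: wf_mgraph_def)
  ultimately show ?thesis
    using card_Diff_le_fvs_antler[OF _ assms(2,3)] by (simp add: antler_def)
qed

end
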